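(* Let $0\le a<1$ and let $E\subset\partial\mathbb{B}_d$ be compact. If $E$ is $\operatorname{Mult}(\mathcal{D}_a)$-totally null, then $\operatorname{cap}(E,\mathcal{D}_a)=0$.
   Context: For $a>0$, $K_a(z,w)=(1-\langle z,w\rangle)^{-a}$, and $K_0(z,w)=\log\frac{e}{1-\langle z,w\rangle}$; $\mathcal{D}_a$ is the reproducing kernel Hilbert space on $\mathbb{B}_d$ with kernel $K_a$. $\operatorname{Mult}(\mathcal{D}_a)$ is its multiplier algebra with multiplier norm; as a WOT-closed subalgebra of $\mathcal{B}(\mathcal{D}_a)$ it is a dual space with a weak-$*$ topology. A complex regular Borel measure $\mu$ on $\partial\mathbb{B}_d$ is $\operatorname{Mult}(\mathcal{D}_a)$-Henkin if $p\mapsto\int p\,d\mu$ on polynomials extends to a weak-$*$ continuous functional on $\operatorname{Mult}(\mathcal{D}_a)$; a Borel $E\subset\partial\mathbb{B}_d$ is $\operatorname{Mult}(\mathcal{D}_a)$-totally null if $|\mu|(E)=0$ for all such $\mu$. The energy of a positive measure $\mu$ is $\mathcal{E}(\mu,\mathcal{D}_a)=\iint|K_a(z,w)|\,d\mu(z)\,d\mu(w)$ and for compact $E$, $\operatorname{cap}(E,\mathcal{D}_a)^{1/2}=\sup\{\mu(E):\mu\ge0\text{ supported on }E,\ \mathcal{E}(\mu,\mathcal{D}_a)\le1\}$. *)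

theory Defs
  imports "HOL-Analysis.Analysis"
begin

definition cinner :: "complex^'n \<Rightarrow> complex^'n \<Rightarrow> complex" where
  "cinner z w = (\<Sum>i\<in>UNIV. z $ i * cnj (w $ i))"

definition kernelD :: "real \<Rightarrow> complex^'n \<Rightarrow> complex^'n \<Rightarrow> complex" where
  "kernelD a z w =
     (if a > 0 then (1 - cinner z w) powr (- complex_of_real a)
      else Ln (exp 1 / (1 - cinner z w)))"

definition kernel_abs :: "real \<Rightarrow> complex^'n \<Rightarrow> complex^'n \<Rightarrow> ennreal" where
  "kernel_abs a z w = (if cinner z w = 1 then \<infinity> else ennreal (cmod (kernelD a z w)))"

text \<open>Functions are extended by 0 outside X.\<close>
definition kfun :: "'x set \<Rightarrow> ('x \<Rightarrow> 'x \<Rightarrow> complex) \<Rightarrow> 'x \<Rightarrow> ('x \<Rightarrow> complex)" where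
  "kfun X K w = (\<lambda>z. if z \<in> X then K z w else 0)"

definition hnorm :: "(('x \<Rightarrow> complex) \<Rightarrow> ('x \<Rightarrow> complex) \<Rightarrow> complex) \<Rightarrow> ('x \<Rightarrow> complex) \<Rightarrow> real" where
  "hnorm ip f = sqrt (Re (ip f f))"

definition rkhs_on :: "'x set \<Rightarrow> ('x \<Rightarrow> 'x \<Rightarrow> complex) \<Rightarrow> ('x \<Rightarrow> complex) set
     \<Rightarrow> (('x \<Rightarrow> complex) \<Rightarrow> ('x \<Rightarrow> complex) \<Rightarrow> complex) \<Rightarrow> bool" where
  "rkhs_on X K H ip \<longleftrightarrow>
     (\<forall>f\<in>H. \<forall>z. z \<notin> X \<longrightarrow> f z = 0) \<and>
     (\<lambda>z. 0) \<in> H \<and> (\<forall>f\<in>H. \<forall>g\<in>H. (\<lambda>z. f z + g z) \<in> H) \<and> (\<forall>c. \<forall>f\<in>H. (\<lambda>z. c * f z) \<in> H) \<and>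
     (\<forall>f\<in>H. \<forall>g\<in>H. \<forall>h\<in>H. ip (\<lambda>z. f z + g z) h = ip f h + ip g h) \<and>
     (\<forall>c. \<forall>f\<in>H. \<forall>g\<in>H. ip (\<lambda>z. c * f z) g = c * ip f g) \<and>
     (\<forall>f\<in>H. \<forall>g\<in>H. ip g f = cnj (ip f g)) \<and>
     (\<forall>f\<in>H. 0 \<le> Re (ip f f) \<and> (ip f f = 0 \<longrightarrow> f = (\<lambda>z. 0))) \<and>
     (\<forall>s. (\<forall>n. s n \<in> H) \<and>
          (\<forall>e>0. \<exists>N. \<forall>m\<ge>N. \<forall>n\<ge>N. hnorm ip (\<lambda>z. s m z - s n z) < e)
          \<longrightarrow> (\<exists>g\<in>H. (\<lambda>n. hnorm ip (\<lambda>z. s n z - g z)) \<longlonglongrightarrow> 0)) \<and>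
     (\<forall>w\<in>X. kfun X K w \<in> H \<and> (\<forall>f\<in>H. ip f (kfun X K w) = f w))"

definition mult :: "'x set \<Rightarrow> ('x \<Rightarrow> complex) set \<Rightarrow> ('x \<Rightarrow> complex) set" where
  "mult X H = {\<phi>. (\<forall>z. z \<notin> X \<longrightarrow> \<phi> z = 0) \<and> (\<forall>f\<in>H. (\<lambda>z. \<phi> z * f z) \<in> H)}"

text \<open>Normal (sigma-weak) functionals T |-> sum_n <T x_n, y_n> with sum ||x_n|| ||y_n|| < oo.
  The weak-* topology of a WOT-closed subalgebra of B(H) is the relative sigma-weak
  topology of B(H), i.e. the initial topology of these functionals.\<close>
definition tc_pair :: "('x \<Rightarrow> complex) set \<Rightarrow> (('x \<Rightarrow> complex) \<Rightarrow> ('x \<Rightarrow> complex) \<Rightarrow> complex)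
     \<Rightarrow> (nat \<Rightarrow> 'x \<Rightarrow> complex) \<Rightarrow> (nat \<Rightarrow> 'x \<Rightarrow> complex) \<Rightarrow> bool" where
  "tc_pair H ip xs ys \<longleftrightarrow> (\<forall>n. xs n \<in> H \<and> ys n \<in> H) \<and>
      summable (\<lambda>n. hnorm ip (xs n) * hnorm ip (ys n))"

definition tc_functional :: "(('x \<Rightarrow> complex) \<Rightarrow> ('x \<Rightarrow> complex) \<Rightarrow> complex)
     \<Rightarrow> (nat \<Rightarrow> 'x \<Rightarrow> complex) \<Rightarrow> (nat \<Rightarrow> 'x \<Rightarrow> complex) \<Rightarrow> ('x \<Rightarrow> complex) \<Rightarrow> complex" where
  "tc_functional ip xs ys \<phi> = (\<Sum>n. ip (\<lambda>z. \<phi> z * xs n z) (ys n))"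

definition weak_star_top :: "'x set \<Rightarrow> ('x \<Rightarrow> complex) set
     \<Rightarrow> (('x \<Rightarrow> complex) \<Rightarrow> ('x \<Rightarrow> complex) \<Rightarrow> complex) \<Rightarrow> ('x \<Rightarrow> complex) topology" where
  "weak_star_top X H ip = topology_generated_by
     {{\<phi> \<in> mult X H. tc_functional ip xs ys \<phi> \<in> U} | xs ys U. tc_pair H ip xs ys \<and> open U}"

definition is_poly :: "(complex^'n \<Rightarrow> complex) \<Rightarrow> bool" where
  "is_poly p \<longleftrightarrow> (\<exists>F c. finite F \<and>
      p = (\<lambda>z. \<Sum>\<alpha>\<in>F. c \<alpha> * (\<Prod>i\<in>UNIV. (z $ i) ^ (\<alpha> i :: nat))))"

definition restrict0 :: "'x set \<Rightarrow> ('x \<Rightarrow> complex) \<Rightarrow> ('x \<Rightarrow> complex)" where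
  "restrict0 X f = (\<lambda>z. if z \<in> X then f z else 0)"

text \<open>A complex regular Borel measure on the sphere is represented as mu = h nu, where nu is a
  finite positive Borel measure concentrated on the sphere and h is nu-integrable;
  then |mu| = |h| nu.  (Every complex Borel measure has this form, with nu = |mu|.)\<close>
definition sphere_cmeasure :: "(complex^'n) measure \<Rightarrow> (complex^'n \<Rightarrow> complex) \<Rightarrow> bool" where
  "sphere_cmeasure \<nu> h \<longleftrightarrow> sets \<nu> = sets borel \<and> finite_measure \<nu> \<and>
      emeasure \<nu> (UNIV - sphere 0 1) = 0 \<and> integrable \<nu> h"

definition henkin :: "(complex^'n \<Rightarrow> complex) set
     \<Rightarrow> (((complex^'n) \<Rightarrow> complex) \<Rightarrow> ((complex^'n) \<Rightarrow> complex) \<Rightarrow> complex)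
     \<Rightarrow> (complex^'n) measure \<Rightarrow> (complex^'n \<Rightarrow> complex) \<Rightarrow> bool" where
  "henkin H ip \<nu> h \<longleftrightarrow> (\<exists>\<Phi>.
      (\<forall>\<phi>\<in>mult (ball 0 1) H. \<forall>\<psi>\<in>mult (ball 0 1) H. \<Phi> (\<lambda>z. \<phi> z + \<psi> z) = \<Phi> \<phi> + \<Phi> \<psi>) \<and>
      (\<forall>c. \<forall>\<phi>\<in>mult (ball 0 1) H. \<Phi> (\<lambda>z. c * \<phi> z) = c * \<Phi> \<phi>) \<and>
      continuous_map (weak_star_top (ball 0 1) H ip) euclidean \<Phi> \<and>
      (\<forall>p. is_poly p \<longrightarrow> \<Phi> (restrict0 (ball 0 1) p) = (LINT z|\<nu>. p z * h z)))"

definition totally_null :: "(complex^'n \<Rightarrow> complex) set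
     \<Rightarrow> (((complex^'n) \<Rightarrow> complex) \<Rightarrow> ((complex^'n) \<Rightarrow> complex) \<Rightarrow> complex)
     \<Rightarrow> (complex^'n) set \<Rightarrow> bool" where
  "totally_null H ip E \<longleftrightarrow> (\<forall>\<nu> h. sphere_cmeasure \<nu> h \<and> henkin H ip \<nu> h \<longrightarrow>
      (\<integral>\<^sup>+ z\<in>E. ennreal (cmod (h z)) \<partial>\<nu>) = 0)"

definition energy :: "real \<Rightarrow> (complex^'n) measure \<Rightarrow> ennreal" where
  "energy a \<mu> = (\<integral>\<^sup>+ z. (\<integral>\<^sup>+ w. kernel_abs a z w \<partial>\<mu>) \<partial>\<mu>)"

definition cap_sqrt :: "real \<Rightarrow> (complex^'n) set \<Rightarrow> ennreal" where
  "cap_sqrt a E = (SUP \<mu> \<in> {\<mu>. sets \<mu> = sets borel \<and> finite_measure \<mu> \<and>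
        emeasure \<mu> (UNIV - E) = 0 \<and> energy a \<mu> \<le> 1}. emeasure \<mu> E)"

definition capacity :: "real \<Rightarrow> (complex^'n) set \<Rightarrow> ennreal" where
  "capacity a E = (cap_sqrt a E)\<^sup>2"

end

(*
  Let mu >= 0 be a measure on E with finite energy.  Its potential g = int K_a(., w) dmu(w)
  lies in D_a and satisfies <f, g> = int f dmu for every f in D_a that extends continuously
  to the closed ball, in particular for polynomials.  Since the constant 1 = K_a(., 0) lies
  in D_a, phi |-> <phi * 1, g> is a weak-* continuous functional on the multiplier algebra
  extending p |-> int p dmu, so mu is Henkin; if E is totally null, then mu(E) = 0 for all
  such mu, i.e. cap(E) = 0.

  The potential is built as the limit of the potentials y_n of finitely supported measures,
  obtained by pushing mu forward along finer and finer discretizations of E and shrinking by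
  radii r_n < 1.  The Gram entries <y_m, y_n> are kernel integrals that converge to the
  energy integral int int K_a dmu dmu (by dominated convergence, using the bound
  |K_a(rho t)| <= 2 |K_a(t)| + 8 for a <= 1), so (y_n) is a Cauchy sequence.
*)

theory Submission
  imports Defs "HOL-Complex_Analysis.Cauchy_Integral_Theorem"
begin

section \<open>Reproducing kernel Hilbert spaces\<close>

locale rkhs =
  fixes X :: "'x set" and K :: "'x \<Rightarrow> 'x \<Rightarrow> complex"
    and H :: "('x \<Rightarrow> complex) set" and ip
  assumes rkhs: "rkhs_on X K H ip"
begin

lemma zero_mem: "(\<lambda>z. 0) \<in> H"
  and add_mem: "f \<in> H \<Longrightarrow> g \<in> H \<Longrightarrow> (\<lambda>z. f z + g z) \<in> H"
  and scale_mem: "f \<in> H \<Longrightarrow> (\<lambda>z. c * f z) \<in> H"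
  and ip_add_left: "f \<in> H \<Longrightarrow> g \<in> H \<Longrightarrow> h \<in> H \<Longrightarrow> ip (\<lambda>z. f z + g z) h = ip f h + ip g h"
  and ip_scale_left: "f \<in> H \<Longrightarrow> g \<in> H \<Longrightarrow> ip (\<lambda>z. c * f z) g = c * ip f g"
  and ip_commute: "f \<in> H \<Longrightarrow> g \<in> H \<Longrightarrow> ip g f = cnj (ip f g)"
  and ip_self_nonneg: "f \<in> H \<Longrightarrow> 0 \<le> Re (ip f f)"
  and ip_self_eq_zero: "f \<in> H \<Longrightarrow> ip f f = 0 \<Longrightarrow> f = (\<lambda>z. 0)"
  and kfun_mem: "w \<in> X \<Longrightarrow> kfun X K w \<in> H"
  and reproducing: "w \<in> X \<Longrightarrow> f \<in> H \<Longrightarrow> ip f (kfun X K w) = f w"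
  using rkhs unfolding rkhs_on_def by blast+

lemma complete:
  assumes "\<And>n. s n \<in> H"
    and "\<And>e. e > 0 \<Longrightarrow> \<exists>N. \<forall>m\<ge>N. \<forall>n\<ge>N. hnorm ip (\<lambda>z. s m z - s n z) < e"
  shows "\<exists>g\<in>H. (\<lambda>n. hnorm ip (\<lambda>z. s n z - g z)) \<longlonglongrightarrow> 0"
  using rkhs assms unfolding rkhs_on_def by blast

lemma diff_mem: "f \<in> H \<Longrightarrow> g \<in> H \<Longrightarrow> (\<lambda>z. f z - g z) \<in> H"
  using add_mem[of f "\<lambda>z. -1 * g z"] scale_mem[of g "-1"] by simp

lemma sum_mem: "finite I \<Longrightarrow> (\<And>i. i \<in> I \<Longrightarrow> f i \<in> H) \<Longrightarrow> (\<lambda>z. \<Sum>i\<in>I. c i * f i z) \<in> H"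
  by (induction I rule: finite_induct) (auto intro!: add_mem scale_mem zero_mem)

lemma ip_scale_right: "f \<in> H \<Longrightarrow> g \<in> H \<Longrightarrow> ip g (\<lambda>z. c * f z) = cnj c * ip g f"
  using ip_commute[OF scale_mem, of f g c] ip_scale_left[of f g c] ip_commute[of f g] by simp

lemma ip_diff_left: "f \<in> H \<Longrightarrow> g \<in> H \<Longrightarrow> h \<in> H \<Longrightarrow> ip (\<lambda>z. f z - g z) h = ip f h - ip g h"
  using ip_add_left[of f "\<lambda>z. -1 * g z" h] scale_mem[of g "-1"] ip_scale_left[of g h "-1"] by simp

lemma ip_diff_right: "f \<in> H \<Longrightarrow> g \<in> H \<Longrightarrow> h \<in> H \<Longrightarrow> ip h (\<lambda>z. f z - g z) = ip h f - ip h g"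
  using ip_commute[OF diff_mem, of f g h] ip_diff_left[of f g h] ip_commute[of f h] ip_commute[of g h]
  by simp

lemma ip_zero_left: "g \<in> H \<Longrightarrow> ip (\<lambda>z. 0) g = 0"
  using ip_scale_left[OF zero_mem, of g 0] by simp

lemma ip_add_right: "f \<in> H \<Longrightarrow> g \<in> H \<Longrightarrow> h \<in> H \<Longrightarrow> ip h (\<lambda>z. f z + g z) = ip h f + ip h g"
  using ip_commute[OF add_mem, of f g h] ip_add_left[of f g h] ip_commute[of f h] ip_commute[of g h]
  by simp

lemma ip_sum_right:
  assumes "finite I" "\<And>i. i \<in> I \<Longrightarrow> f i \<in> H" "g \<in> H"
  shows "ip g (\<lambda>z. \<Sum>i\<in>I. c i * f i z) = (\<Sum>i\<in>I. cnj (c i) * ip g (f i))"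
  using assms
proof (induction I rule: finite_induct)
  case empty
  then show ?case using ip_commute[OF zero_mem, of g] ip_zero_left by simp
next
  case (insert i I)
  then show ?case
    by (simp add: ip_add_right ip_scale_right scale_mem sum_mem)
qed

lemma ip_self_real: "f \<in> H \<Longrightarrow> ip f f = of_real (Re (ip f f))"
  using ip_commute[of f f] by (simp add: complex_eq_iff)

lemma hnorm_nonneg: "f \<in> H \<Longrightarrow> 0 \<le> hnorm ip f"
  by (simp add: hnorm_def ip_self_nonneg)

lemma norm_ip_le:
  assumes f: "f \<in> H" and g: "g \<in> H"
  shows "cmod (ip f g) \<le> hnorm ip f * hnorm ip g"
proof (cases "ip g g = 0")
  case True
  then show ?thesis
    using ip_self_eq_zero[OF g] ip_commute[OF zero_mem f] ip_zero_left[OF f] hnorm_nonneg[OF f]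
    by (simp add: hnorm_def)
next
  case False
  define A B c where "A = Re (ip f f)" and "B = Re (ip g g)" and "c = ip f g"
  have B: "B > 0"
    using ip_self_nonneg[OF g] ip_self_real[OF g] False unfolding B_def
    by (metis less_eq_real_def of_real_0)
  define t where "t = c / of_real B"
  have h: "(\<lambda>z. f z - t * g z) \<in> H"
    by (intro diff_mem scale_mem f g)
  have tg: "(\<lambda>z. t * g z) \<in> H"
    by (intro scale_mem g)
  have "ip (\<lambda>z. f z - t * g z) (\<lambda>z. f z - t * g z)
      = ip f f - cnj t * c - t * cnj c + t * cnj t * ip g g"
    using f g tg h ip_commute[of f g]
    by (simp add: ip_diff_left[OF f tg] ip_diff_right[OF f tg] ip_scale_left ip_scale_right c_def
        algebra_simps)
  also have "\<dots> = of_real (A - (cmod c)^2 / B)"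
  proof -
    have "ip f f = of_real A" "ip g g = of_real B"
      using ip_self_real[OF f] ip_self_real[OF g] by (simp_all add: A_def B_def)
    moreover have "complex_of_real B \<noteq> 0"
      using B by simp
    ultimately show ?thesis
      using complex_norm_square[of c] by (simp add: t_def field_simps power2_eq_square)
  qed
  finally have "0 \<le> A - (cmod c)^2 / B"
    using ip_self_nonneg[OF h] by simp
  then have "(cmod c)^2 \<le> A * B"
    using B by (simp add: field_simps)
  then have "cmod c \<le> sqrt (A * B)"
    by (simp add: real_le_rsqrt)
  then show ?thesis
    by (simp add: hnorm_def A_def B_def c_def real_sqrt_mult)
qed

lemma hnorm_zero: "hnorm ip (\<lambda>z. 0) = 0"
  using ip_zero_left[OF zero_mem] by (simp add: hnorm_def)

lemma convergent_if_inner_tendsto: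
  assumes y: "\<And>n. y n \<in> H"
    and lim: "((\<lambda>(m, n). ip (y m) (y n)) \<longlongrightarrow> L) (sequentially \<times>\<^sub>F sequentially)"
  shows "\<exists>g\<in>H. (\<lambda>n. hnorm ip (\<lambda>z. y n z - g z)) \<longlonglongrightarrow> 0"
proof (rule complete[OF y])
  let ?F = "sequentially \<times>\<^sub>F sequentially"
  have lim': "((\<lambda>p. ip (y (f p)) (y (g p))) \<longlongrightarrow> L) ?F"
    if "filterlim f sequentially ?F" "filterlim g sequentially ?F" for f g :: "nat \<times> nat \<Rightarrow> nat"
    using filterlim_compose[OF lim filterlim_Pair[OF that]] by simp
  have "((\<lambda>p. Re (ip (y (fst p)) (y (fst p)) - ip (y (fst p)) (y (snd p))
        - ip (y (snd p)) (y (fst p)) + ip (y (snd p)) (y (snd p)))) \<longlongrightarrow> Re (L - L - L + L)) ?F"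
    by (intro tendsto_Re tendsto_add tendsto_diff lim' filterlim_fst filterlim_snd)
  moreover have "Re (ip (\<lambda>z. y m z - y n z) (\<lambda>z. y m z - y n z))
      = Re (ip (y m) (y m) - ip (y m) (y n) - ip (y n) (y m) + ip (y n) (y n))" for m n
    using ip_diff_left[OF y y diff_mem[OF y y]] ip_diff_right[OF y y y] by simp
  ultimately have "((\<lambda>p. Re (ip (\<lambda>z. y (fst p) z - y (snd p) z) (\<lambda>z. y (fst p) z - y (snd p) z)))
      \<longlongrightarrow> 0) ?F"
    by simp
  from tendsto_real_sqrt[OF this]
  have hn: "((\<lambda>p. hnorm ip (\<lambda>z. y (fst p) z - y (snd p) z)) \<longlongrightarrow> 0) ?F"
    by (simp add: hnorm_def)
  fix e :: real
  assume "e > 0"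
  have "\<forall>\<^sub>F p in ?F. hnorm ip (\<lambda>z. y (fst p) z - y (snd p) z) < e"
    by (rule order_tendstoD(2)[OF hn \<open>e > 0\<close>])
  then obtain N where "\<And>m n. m \<ge> N \<Longrightarrow> n \<ge> N \<Longrightarrow> hnorm ip (\<lambda>z. y n z - y m z) < e"
    unfolding eventually_prod_sequentially by auto
  then show "\<exists>N. \<forall>m\<ge>N. \<forall>n\<ge>N. hnorm ip (\<lambda>z. y m z - y n z) < e"
    by blast
qed

lemma tendsto_ip_right:
  assumes f: "f \<in> H" and g: "g \<in> H" and y: "\<And>n. y n \<in> H"
    and lim: "(\<lambda>n. hnorm ip (\<lambda>z. y n z - g z)) \<longlonglongrightarrow> 0"
  shows "(\<lambda>n. ip f (y n)) \<longlonglongrightarrow> ip f g"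
proof -
  have "norm (ip f (y n) - ip f g) \<le> hnorm ip f * hnorm ip (\<lambda>z. y n z - g z)" for n
    using norm_ip_le[OF f diff_mem[OF y g]] ip_diff_right[OF y g f] by simp
  then have "(\<lambda>n. ip f (y n) - ip f g) \<longlonglongrightarrow> 0"
    by (intro Lim_null_comparison[OF always_eventually tendsto_mult_right_zero[OF lim]]) blast
  then show ?thesis
    by (rule LIM_zero_cancel)
qed

lemma multiplier_times_unit:
  assumes "w \<in> X" "\<And>z. z \<in> X \<Longrightarrow> K z w = 1" "\<phi> \<in> mult X H"
  shows "(\<lambda>z. \<phi> z * kfun X K w z) = \<phi>"
  using assms by (auto simp: mult_def kfun_def fun_eq_iff)

lemma multiplier_mem:
  assumes "w \<in> X" "\<And>z. z \<in> X \<Longrightarrow> K z w = 1" "\<phi> \<in> mult X H"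
  shows "\<phi> \<in> H"
  using assms(3) kfun_mem[OF assms(1)] multiplier_times_unit[OF assms] unfolding mult_def by force

definition basic_weak_star_opens :: "('x \<Rightarrow> complex) set set" where
  "basic_weak_star_opens = {{\<phi> \<in> mult X H. tc_functional ip xs ys \<phi> \<in> U} | xs ys U.
     tc_pair H ip xs ys \<and> open U}"

lemma weak_star_top_eq: "weak_star_top X H ip = topology_generated_by basic_weak_star_opens"
  by (simp add: weak_star_top_def basic_weak_star_opens_def)

lemma topspace_weak_star_top: "topspace (weak_star_top X H ip) = mult X H"
proof -
  have "tc_pair H ip (\<lambda>_. \<lambda>z. 0) (\<lambda>_. \<lambda>z. 0)"
    using zero_mem by (simp add: tc_pair_def hnorm_zero)
  then have "mult X H \<in> basic_weak_star_opens"
    unfolding basic_weak_star_opens_def by force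
  then show ?thesis
    unfolding weak_star_top_eq by (auto simp: basic_weak_star_opens_def)
qed

text \<open>On multipliers this functional is the normal functional of the pair of sequences
  (e, 0, 0, ...) and (g, g, g, ...).\<close>
lemma continuous_map_weak_star_ip:
  assumes e: "e \<in> H" and g: "g \<in> H"
  shows "continuous_map (weak_star_top X H ip) euclidean (\<lambda>\<phi>. ip (\<lambda>z. \<phi> z * e z) g)"
proof -
  define xs :: "nat \<Rightarrow> 'x \<Rightarrow> complex" where "xs n = (if n = 0 then e else (\<lambda>z. 0))" for n
  have "(\<lambda>n. hnorm ip (xs n) * hnorm ip g) = (\<lambda>n. if n = 0 then hnorm ip e * hnorm ip g else 0)"
    by (auto simp: xs_def hnorm_zero)
  then have pair: "tc_pair H ip xs (\<lambda>_. g)"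
    using e g zero_mem unfolding tc_pair_def xs_def by simp
  have functional: "tc_functional ip xs (\<lambda>_. g) \<phi> = ip (\<lambda>z. \<phi> z * e z) g" for \<phi>
  proof -
    have "(\<lambda>n. ip (\<lambda>z. \<phi> z * xs n z) g) = (\<lambda>n. if n = 0 then ip (\<lambda>z. \<phi> z * e z) g else 0)"
      using ip_zero_left[OF g] by (auto simp: xs_def)
    then show ?thesis
      unfolding tc_functional_def
      using sums_single[of 0 "\<lambda>_. ip (\<lambda>z. \<phi> z * e z) g", THEN sums_unique] by simp
  qed
  have "mult X H \<inter> (\<lambda>\<phi>. ip (\<lambda>z. \<phi> z * e z) g) -` U \<in> basic_weak_star_opens" if "open U" for U
    unfolding basic_weak_star_opens_def functional[symmetric] using pair that by blast
  then show ?thesis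
    unfolding continuous_map_openin_preimage_eq topspace_weak_star_top
    by (simp add: weak_star_top_eq topology_generated_by_Basis)
qed

end

lemma norm_cinner_le: "cmod (cinner z w) \<le> norm z * norm w"
proof -
  have "cmod (cinner z w) \<le> (\<Sum>i\<in>UNIV. cmod (z $ i) * cmod (w $ i))"
    unfolding cinner_def using norm_sum[of "\<lambda>i. z $ i * cnj (w $ i)" UNIV] by (simp add: norm_mult)
  also have "\<dots> \<le> L2_set (\<lambda>i. cmod (z $ i)) UNIV * L2_set (\<lambda>i. cmod (w $ i)) UNIV"
    using L2_set_mult_ineq[of "\<lambda>i. cmod (z $ i)" "\<lambda>i. cmod (w $ i)" UNIV] by simp
  finally show ?thesis
    by (simp add: norm_vec_def)
qed

lemma norm_scaled_cinner_le:
  assumes "norm u \<le> 1" "norm v \<le> 1" "0 \<le> \<rho>"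
  shows "cmod (of_real \<rho> * cinner u v) \<le> \<rho>"
proof -
  have "cmod (cinner u v) \<le> 1"
    using norm_cinner_le[of u v] mult_le_one[OF assms(1) norm_ge_zero assms(2)] by linarith
  then show ?thesis
    using assms(3) by (simp add: norm_mult mult_left_le)
qed

lemma cinner_scaleR_left: "cinner (r *\<^sub>R z) w = of_real r * cinner z w"
  and cinner_scaleR_right: "cinner z (r *\<^sub>R w) = of_real r * cinner z w"
proof -
  have nth: "(r *\<^sub>R v) $ i = of_real r * v $ i" for v :: "complex^'n" and i
    by (metis vector_scaleR_component scaleR_conv_of_real)
  show "cinner (r *\<^sub>R z) w = of_real r * cinner z w" "cinner z (r *\<^sub>R w) = of_real r * cinner z w"
    unfolding cinner_def nth by (simp_all add: sum_distrib_left algebra_simps)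
qed

lemma cinner_diff_left: "cinner (z - z') w = cinner z w - cinner z' w"
  and cinner_diff_right: "cinner z (w - w') = cinner z w - cinner z w'"
  and cinner_zero_right: "cinner z 0 = 0"
  by (simp_all add: cinner_def sum_subtractf algebra_simps)

lemma dist_scaled_cinner_left_le:
  assumes "norm v \<le> 1" "0 \<le> \<rho>" "\<rho> \<le> 1"
  shows "dist (of_real \<rho> * cinner u v) (of_real \<rho> * cinner u' v) \<le> dist u u'"
proof -
  have "dist (of_real \<rho> * cinner u v) (of_real \<rho> * cinner u' v) = \<rho> * cmod (cinner (u - u') v)"
    using assms by (simp add: dist_norm cinner_diff_left right_diff_distrib[symmetric] norm_mult)
  also have "\<dots> \<le> 1 * norm (u - u')"
    using assms order_trans[OF norm_cinner_le mult_left_le[OF assms(1) norm_ge_zero]]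
    by (intro mult_mono) auto
  finally show ?thesis
    by (simp add: dist_norm)
qed

lemma dist_scaled_cinner_right_le:
  assumes "norm u \<le> 1" "0 \<le> \<rho>" "\<rho> \<le> 1"
  shows "dist (of_real \<rho> * cinner u v) (of_real \<rho> * cinner u v') \<le> dist v v'"
proof -
  have "dist (of_real \<rho> * cinner u v) (of_real \<rho> * cinner u v') = \<rho> * cmod (cinner u (v - v'))"
    using assms by (simp add: dist_norm cinner_diff_right right_diff_distrib[symmetric] norm_mult)
  also have "\<dots> \<le> 1 * norm (v - v')"
    using assms
      order_trans[OF norm_cinner_le mult_left_le_one_le[OF norm_ge_zero norm_ge_zero assms(1)]]
    by (intro mult_mono) auto
  finally show ?thesis
    by (simp add: dist_norm)
qed

lemma borel_measurable_cinner [measurable]: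
  assumes "f \<in> borel_measurable M" "g \<in> borel_measurable M"
  shows "(\<lambda>x. cinner (f x) (g x)) \<in> borel_measurable M"
proof -
  have "(\<lambda>p. cinner (fst p) (snd p)) \<in> borel_measurable (borel \<Otimes>\<^sub>M borel)"
    unfolding borel_prod cinner_def by (intro borel_measurable_continuous_onI continuous_intros)
  from measurable_compose[OF measurable_Pair[OF assms] this] show ?thesis
    by simp
qed

lemma Re_less_1:
  assumes "cmod t \<le> 1" "t \<noteq> 1"
  shows "Re t < 1"
proof (rule ccontr)
  assume "\<not> Re t < 1"
  then have "Re t = 1"
    using assms(1) complex_Re_le_cmod[of t] by linarith
  moreover have "(Re t)\<^sup>2 + (Im t)\<^sup>2 \<le> 1"
    using assms(1) by (simp add: cmod_def)
  ultimately show False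
    using assms(2) by (simp add: complex_eq_iff)
qed

definition kernel_profile :: "real \<Rightarrow> complex \<Rightarrow> complex" where
  "kernel_profile a u =
     (if a > 0 then (1 - u) powr (- complex_of_real a) else Ln (exp 1 / (1 - u)))"

lemma kernelD_eq_kernel_profile: "kernelD a z w = kernel_profile a (cinner z w)"
  by (simp add: kernelD_def kernel_profile_def)

lemma kernel_profile_0 [simp]: "kernel_profile a 0 = 1"
  using Ln_exp[of 1] by (simp add: kernel_profile_def)

lemma kernel_profile_measurable [measurable]: "kernel_profile a \<in> borel_measurable borel"
  unfolding kernel_profile_def by measurable

lemma continuous_on_kernel_profile: "continuous_on {u. Re u < 1} (kernel_profile a)"
proof (cases "a > 0")
  case True
  have "continuous_on {u. Re u < 1} (\<lambda>u. (1 - u) powr (- complex_of_real a))"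
    by (intro continuous_on_powr_complex continuous_intros) auto
  then show ?thesis
    using True by (simp add: kernel_profile_def)
next
  case False
  have pos: "Re (exp 1 / (1 - u)) > 0" if "Re u < 1" for u
  proof -
    have "(exp 1 :: complex) = of_real (exp 1)"
      by (metis exp_of_real of_real_1)
    then show ?thesis
      using that by (simp add: Re_divide add_pos_nonneg)
  qed
  then have "continuous_on {u. Re u < 1} (\<lambda>u. Ln (exp 1 / (1 - u)))"
    by (intro continuous_on_Ln' continuous_intros) (auto simp: complex_nonpos_Reals_iff dest!: pos)
  then show ?thesis
    using False by (simp add: kernel_profile_def)
qed

lemma isCont_kernel_profile: "Re u < 1 \<Longrightarrow> isCont (kernel_profile a) u"
  using continuous_on_kernel_profile open_halfspace_Re_lt[of 1]
  by (simp add: continuous_on_eq_continuous_at)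

lemma continuous_on_kernel_profile_cball:
  assumes "\<rho> < 1"
  shows "continuous_on (cball 0 \<rho>) (kernel_profile a)"
proof (rule continuous_on_subset[OF continuous_on_kernel_profile], safe)
  fix u :: complex
  assume "u \<in> cball 0 \<rho>"
  then show "Re u < 1"
    using assms complex_Re_le_cmod[of u] by simp
qed

lemma kernel_profile_bounded_cball:
  assumes "\<rho> < 1"
  shows "\<exists>B. \<forall>u\<in>cball 0 \<rho>. cmod (kernel_profile a u) \<le> B"
  using compact_imp_bounded[OF
      compact_continuous_image[OF continuous_on_kernel_profile_cball[OF assms]]]
  by (auto simp: bounded_iff)

lemma norm_one_minus_le_scaled:
  fixes t :: complex
  assumes "cmod t \<le> 1" "0 \<le> \<rho>" "\<rho> \<le> 1"
  shows "cmod (1 - t) \<le> 2 * cmod (1 - of_real \<rho> * t)"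
proof -
  have "cmod (1 - t) \<le> cmod (1 - of_real \<rho> * t) + cmod (of_real (1 - \<rho>) * t)"
    using norm_triangle_ineq4[of "1 - of_real \<rho> * t" "of_real (1 - \<rho>) * t"]
    by (simp add: algebra_simps)
  also have "cmod (of_real (1 - \<rho>) * t) \<le> 1 - \<rho> * cmod t"
  proof -
    have "cmod (of_real (1 - \<rho>) * t) = (1 - \<rho>) * cmod t"
      using assms by (simp only: norm_mult norm_of_real abs_of_nonneg diff_ge_0_iff_ge)
    then show ?thesis
      using assms by (simp add: algebra_simps)
  qed
  also have "1 - \<rho> * cmod t \<le> cmod (1 - of_real \<rho> * t)"
    using norm_triangle_ineq2[of 1 "of_real \<rho> * t"] assms by (simp add: norm_mult)
  finally show ?thesis
    by simp
qed

lemma norm_one_minus_scaled_le: "cmod t \<le> 1 \<Longrightarrow> 0 \<le> \<rho> \<Longrightarrow> \<rho> \<le> 1 \<Longrightarrow> cmod (1 - of_real \<rho> * t) \<le> 2"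
  using norm_triangle_ineq4[of 1 "of_real \<rho> * t"] mult_le_one[of \<rho> "cmod t"] by (simp add: norm_mult)

text \<open>This is where a \<le> 1 is needed: 2 powr a \<le> 2.\<close>
lemma norm_kernel_profile_scaled_le_power:
  fixes t :: complex
  assumes a: "0 < a" "a \<le> 1" and t: "cmod t \<le> 1" "t \<noteq> 1" and \<rho>: "0 \<le> \<rho>" "\<rho> \<le> 1"
  shows "cmod (kernel_profile a (of_real \<rho> * t)) \<le> 2 * cmod (kernel_profile a t)"
proof -
  have le: "cmod (1 - t) \<le> 2 * cmod (1 - of_real \<rho> * t)"
    using norm_one_minus_le_scaled t \<rho> by blast
  have t0: "0 < cmod (1 - t)"
    using t by simp
  have "cmod (kernel_profile a (of_real \<rho> * t)) = cmod (1 - of_real \<rho> * t) powr (- a)"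
    using a by (simp add: kernel_profile_def norm_powr_real_powr')
  also have "\<dots> \<le> (cmod (1 - t) / 2) powr (- a)"
    using le t0 a by (intro powr_mono2') auto
  also have "\<dots> = 2 powr a * cmod (1 - t) powr (- a)"
    using t0 by (simp add: powr_divide powr_minus divide_simps)
  also have "\<dots> \<le> 2 * cmod (1 - t) powr (- a)"
    using powr_mono[of a 1 2] a by (intro mult_right_mono) auto
  also have "cmod (1 - t) powr (- a) = cmod (kernel_profile a t)"
    using a by (simp add: kernel_profile_def norm_powr_real_powr')
  finally show ?thesis .
qed

lemma norm_kernel_profile_scaled_le_log:
  fixes t :: complex
  assumes a: "a \<le> 0" and t: "cmod t \<le> 1" "t \<noteq> 1" and \<rho>: "0 \<le> \<rho>" "\<rho> \<le> 1"
  shows "cmod (kernel_profile a (of_real \<rho> * t)) \<le> cmod (kernel_profile a t) + 8"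
proof -
  let ?u = "1 - of_real \<rho> * t"
  have le: "cmod (1 - t) \<le> 2 * cmod ?u"
    using norm_one_minus_le_scaled t \<rho> by blast
  have t0: "0 < cmod (1 - t)"
    using t by simp
  then have u0: "0 < cmod ?u"
    using le by linarith
  have exp1: "(exp 1 :: complex) = of_real (exp 1)"
    by (metis exp_of_real of_real_1)
  have "cmod (kernel_profile a (of_real \<rho> * t)) \<le> \<bar>Re (Ln (exp 1 / ?u))\<bar> + pi"
    using a cmod_le[of "Ln (exp 1 / ?u)"] mpi_less_Im_Ln[of "exp 1 / ?u"] Im_Ln_le_pi[of "exp 1 / ?u"] u0
    by (simp add: kernel_profile_def)
  also have "Re (Ln (exp 1 / ?u)) = 1 - ln (cmod ?u)"
    using u0 by (simp add: exp1 norm_divide ln_div)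
  also have "\<bar>1 - ln (cmod ?u)\<bar> \<le> 1 + \<bar>ln (cmod (1 - t))\<bar> + ln 2"
  proof -
    have "ln (cmod ?u) \<le> ln 2"
      using norm_one_minus_scaled_le[OF t(1) \<rho>] u0 by simp
    moreover have "ln (cmod (1 - t)) - ln 2 \<le> ln (cmod ?u)"
      using le t0 ln_le_cancel_iff[of "cmod (1 - t) / 2" "cmod ?u"] u0 by (simp add: ln_div)
    ultimately show ?thesis
      by simp
  qed
  also have "\<bar>ln (cmod (1 - t))\<bar> \<le> 1 + cmod (kernel_profile a t)"
  proof -
    have "Re (kernel_profile a t) = 1 - ln (cmod (1 - t))"
      using a t0 by (simp add: kernel_profile_def exp1 norm_divide ln_div)
    then show ?thesis
      using abs_Re_le_cmod[of "kernel_profile a t"] by linarith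
  qed
  finally show ?thesis
    using ln_2_less_1 pi_less_4 by linarith
qed

lemma norm_kernel_profile_scaled_le:
  fixes t :: complex
  assumes "a \<le> 1" "cmod t \<le> 1" "t \<noteq> 1" "0 \<le> \<rho>" "\<rho> \<le> 1"
  shows "cmod (kernel_profile a (of_real \<rho> * t)) \<le> 2 * cmod (kernel_profile a t) + 8"
proof (cases "a > 0")
  case True
  then show ?thesis
    using norm_kernel_profile_scaled_le_power[OF True assms] by simp
next
  case False
  then show ?thesis
    using norm_kernel_profile_scaled_le_log[of a t \<rho>] assms norm_ge_zero[of "kernel_profile a t"]
    by linarith
qed

section \<open>Discretizing compact sets\<close>

lemma compact_borel_discretization:
  fixes E :: "'a::metric_space set"
  assumes "compact E" "E \<noteq> {}" "0 < \<delta>"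
  shows "\<exists>s. s \<in> borel_measurable borel \<and> finite (range s) \<and> range s \<subseteq> E \<and>
    (\<forall>x\<in>E. dist (s x) x < \<delta>)"
proof -
  obtain C where C: "C \<subseteq> E" "finite C" "E \<subseteq> (\<Union>c\<in>C. ball c \<delta>)"
    using compactE_image[OF assms(1), of E "\<lambda>c. ball c \<delta>"] assms(3) by force
  obtain cs where cs: "set cs = C"
    using finite_list[OF C(2)] by blast
  obtain d where d: "d \<in> E"
    using assms(2) by blast
  \<comment> \<open>send x to the first centre in the list whose ball contains x\<close>
  define F :: "'a \<Rightarrow> ('a \<Rightarrow> 'a) \<Rightarrow> 'a \<Rightarrow> 'a"
    where "F = (\<lambda>c f x. if x \<in> ball c \<delta> then c else f x)"
  have "foldr F cs' (\<lambda>_. d) \<in> borel_measurable borel" for cs'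
    by (induction cs') (auto simp: F_def simp del: mem_ball intro!: measurable_If_set)
  moreover have "range (foldr F cs' (\<lambda>_. d)) \<subseteq> insert d (set cs')
      \<and> (\<forall>x\<in>(\<Union>c\<in>set cs'. ball c \<delta>). dist (foldr F cs' (\<lambda>_. d) x) x < \<delta>)" for cs'
    by (induction cs') (auto simp: F_def dist_commute)
  ultimately have F: "foldr F cs' (\<lambda>_. d) \<in> borel_measurable borel \<and>
      range (foldr F cs' (\<lambda>_. d)) \<subseteq> insert d (set cs') \<and>
      (\<forall>x\<in>(\<Union>c\<in>set cs'. ball c \<delta>). dist (foldr F cs' (\<lambda>_. d) x) x < \<delta>)" for cs'
    by blast
  show ?thesis
  proof (intro exI conjI)
    show "range (foldr F cs (\<lambda>_. d)) \<subseteq> E" "finite (range (foldr F cs (\<lambda>_. d)))"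
      using F[of cs] cs C d by (auto intro: finite_subset)
  qed (use F[of cs] cs C in auto)
qed

lemma integral_finite_range:
  fixes s :: "'a \<Rightarrow> 'b::t1_space" and g :: "'b \<Rightarrow> 'c::{banach, second_countable_topology}"
  assumes M: "finite_measure M" and s: "s \<in> borel_measurable M" and fin: "finite (s ` space M)"
  shows "integrable M (\<lambda>x. g (s x))"
    and "(LINT x|M. g (s x)) = (\<Sum>d\<in>s ` space M. measure M (s -` {d} \<inter> space M) *\<^sub>R g d)"
proof -
  interpret finite_measure M
    by (rule M)
  define A where "A d = s -` {d} \<inter> space M" for d
  have A: "A d \<in> sets M" for d
    unfolding A_def using s by measurable
  have pointwise: "g (s x) = (\<Sum>d\<in>s ` space M. indicator (A d) x *\<^sub>R g d)" if "x \<in> space M" for x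
  proof -
    have "(\<Sum>d\<in>s ` space M. indicator (A d) x *\<^sub>R g d) = (\<Sum>d\<in>s ` space M. if d = s x then g d else 0)"
      using that by (intro sum.cong) (auto simp: A_def indicator_def)
    then show ?thesis
      using fin that by simp
  qed
  have int: "integrable M (\<lambda>x. indicator (A d) x *\<^sub>R g d)" for d
    using A by (auto intro!: integrable_scaleR_left integrable_real_indicator simp: less_top[symmetric])
  have "integrable M (\<lambda>x. g (s x)) \<longleftrightarrow> integrable M (\<lambda>x. \<Sum>d\<in>s ` space M. indicator (A d) x *\<^sub>R g d)"
    by (rule Bochner_Integration.integrable_cong) (simp_all add: pointwise)
  then show "integrable M (\<lambda>x. g (s x))"
    using int by simp
  have "(LINT x|M. g (s x)) = integral\<^sup>L M (\<lambda>x. \<Sum>d\<in>s ` space M. indicator (A d) x *\<^sub>R g d)"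
    by (rule Bochner_Integration.integral_cong) (simp_all add: pointwise)
  also have "\<dots> = (\<Sum>d\<in>s ` space M. LINT x|M. indicator (A d) x *\<^sub>R g d)"
    using int by simp
  also have "\<dots> = (\<Sum>d\<in>s ` space M. measure M (A d) *\<^sub>R g d)"
    using A by (simp add: less_top[symmetric])
  finally show "(LINT x|M. g (s x)) = (\<Sum>d\<in>s ` space M. measure M (s -` {d} \<inter> space M) *\<^sub>R g d)"
    by (simp add: A_def)
qed

lemma continuous_on_is_poly: "is_poly p \<Longrightarrow> continuous_on UNIV p"
  unfolding is_poly_def by (auto intro!: continuous_intros)

lemma is_poly_eq_on_cball:
  assumes "is_poly p" "is_poly q" "restrict0 (ball 0 1) p = restrict0 (ball 0 1) q"
  shows "z \<in> cball 0 1 \<Longrightarrow> p z = q z"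
proof -
  have "closed {z. p z = q z}"
    using continuous_on_is_poly assms(1,2) by (intro closed_Collect_eq) auto
  moreover have "ball 0 1 \<subseteq> {z. p z = q z}"
    using assms(3) by (auto simp: restrict0_def fun_eq_iff split: if_splits)
  ultimately have "closure (ball 0 1) \<subseteq> {z. p z = q z}"
    by (rule closure_minimal[rotated])
  then show "z \<in> cball 0 1 \<Longrightarrow> p z = q z"
    by auto
qed

lemma integral_sphere_cmeasure_poly_cong:
  assumes \<nu>: "sphere_cmeasure \<nu> h" and "is_poly p" "is_poly q"
    and "restrict0 (ball 0 1) p = restrict0 (ball 0 1) q"
  shows "(LINT z|\<nu>. p z * h z) = (LINT z|\<nu>. q z * h z)"
proof (rule integral_cong_AE)
  have sets: "sets \<nu> = sets borel" and h: "h \<in> borel_measurable \<nu>"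
    using \<nu> by (auto simp: sphere_cmeasure_def)
  have "p \<in> borel_measurable \<nu>" "q \<in> borel_measurable \<nu>"
    using assms(2,3) continuous_on_is_poly
    by (auto simp: measurable_cong_sets[OF sets refl] intro: borel_measurable_continuous_onI)
  then show "(\<lambda>z. p z * h z) \<in> borel_measurable \<nu>" "(\<lambda>z. q z * h z) \<in> borel_measurable \<nu>"
    using h by auto
  have "AE z in \<nu>. z \<in> sphere 0 1"
    using \<nu> by (intro AE_I[of _ _ "UNIV - sphere 0 1"])
      (auto simp: sphere_cmeasure_def sets_eq_imp_space_eq)
  then show "AE z in \<nu>. p z * h z = q z * h z"
    by eventually_elim (use is_poly_eq_on_cball[OF assms(2-4)] in auto)
qed

lemma integral_some_poly_representative:
  assumes \<nu>: "sphere_cmeasure \<nu> h" and p: "is_poly p"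
  shows "(LINT z|\<nu>. (SOME q. is_poly q \<and> restrict0 (ball 0 1) p = restrict0 (ball 0 1) q) z * h z)
    = (LINT z|\<nu>. p z * h z)"
proof -
  define q where "q = (SOME q. is_poly q \<and> restrict0 (ball 0 1) p = restrict0 (ball 0 1) q)"
  have q: "is_poly q" "restrict0 (ball 0 1) p = restrict0 (ball 0 1) q"
    unfolding q_def
    using someI[of "\<lambda>q. is_poly q \<and> restrict0 (ball 0 1) p = restrict0 (ball 0 1) q" p] p by auto
  show ?thesis
    using integral_sphere_cmeasure_poly_cong[OF \<nu> p q] unfolding q_def by simp
qed

lemma henkinI_moments:
  assumes rkhs: "rkhs_on (ball 0 1) K H ip"
    and K: "\<And>z. z \<in> ball 0 1 \<Longrightarrow> K z 0 = 1"
    and g: "g \<in> H" and \<nu>: "sphere_cmeasure \<nu> h"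
    and moments: "\<And>p. is_poly p \<Longrightarrow> restrict0 (ball 0 1) p \<in> H \<Longrightarrow>
      ip (restrict0 (ball 0 1) p) g = (LINT z|\<nu>. p z * h z)"
  shows "henkin H ip \<nu> h"
proof -
  interpret rkhs "ball 0 1" K H ip
    by (rule rkhs.intro[OF rkhs])
  let ?B = "ball (0 :: complex^'n) 1"
  let ?e = "kfun ?B K 0"
  have e: "?e \<in> H"
    by (intro kfun_mem) simp
  have mult_e: "(\<lambda>z. \<phi> z * ?e z) = \<phi>" and mult_mem: "\<phi> \<in> H" if "\<phi> \<in> mult ?B H" for \<phi>
    using multiplier_times_unit[OF _ K that] multiplier_mem[OF _ K that] by simp_all
  \<comment> \<open>outside the multipliers, henkin constrains \<Phi> only at restricted polynomials\<close>
  define \<Phi> where "\<Phi> \<phi> = (if \<phi> \<in> H then ip \<phi> g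
    else LINT z|\<nu>. (SOME q. is_poly q \<and> \<phi> = restrict0 ?B q) z * h z)" for \<phi>
  have "continuous_map (weak_star_top ?B H ip) euclidean \<Phi>"
  proof (rule continuous_map_eq[OF continuous_map_weak_star_ip[OF e g]])
    fix \<phi>
    assume "\<phi> \<in> topspace (weak_star_top ?B H ip)"
    then show "ip (\<lambda>z. \<phi> z * ?e z) g = \<Phi> \<phi>"
      using mult_e mult_mem by (simp add: topspace_weak_star_top \<Phi>_def)
  qed
  moreover have "\<Phi> (restrict0 ?B p) = (LINT z|\<nu>. p z * h z)" if p: "is_poly p" for p
  proof (cases "restrict0 ?B p \<in> H")
    case True
    then show ?thesis
      using moments[OF p] by (simp add: \<Phi>_def)
  next
    case False
    then show ?thesis
      using integral_some_poly_representative[OF \<nu> p] by (simp add: \<Phi>_def)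
  qed
  moreover have "\<Phi> (\<lambda>z. \<phi> z + \<psi> z) = \<Phi> \<phi> + \<Phi> \<psi>"
    if "\<phi> \<in> mult ?B H" "\<psi> \<in> mult ?B H" for \<phi> \<psi>
    using mult_mem[OF that(1)] mult_mem[OF that(2)]
    by (simp add: \<Phi>_def add_mem ip_add_left[OF _ _ g])
  moreover have "\<Phi> (\<lambda>z. c * \<phi> z) = c * \<Phi> \<phi>" if "\<phi> \<in> mult ?B H" for c \<phi>
    using mult_mem[OF that] by (simp add: \<Phi>_def scale_mem ip_scale_left[OF _ g])
  ultimately show ?thesis
    unfolding henkin_def by blast
qed

section \<open>The potential of a measure of finite energy\<close>

text \<open>\<delta> n is both the mesh of the discretization s n and a modulus of continuity of the kernel
  on the disc of radius r n for the tolerance \<epsilon> n.\<close>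
locale discretized_potential =
  fixes a :: real and E :: "(complex^'n) set"
    and H :: "(complex^'n \<Rightarrow> complex) set"
    and ip :: "(complex^'n \<Rightarrow> complex) \<Rightarrow> (complex^'n \<Rightarrow> complex) \<Rightarrow> complex"
    and \<mu> :: "(complex^'n) measure"
    and r \<delta> \<epsilon> :: "nat \<Rightarrow> real" and s :: "nat \<Rightarrow> complex^'n \<Rightarrow> complex^'n"
  assumes a_le_1: "a \<le> 1"
    and E_borel: "E \<in> sets borel" and E_sphere: "E \<subseteq> sphere 0 1"
    and rkhs_D: "rkhs_on (ball 0 1) (kernelD a) H ip"
    and sets_\<mu>: "sets \<mu> = sets borel" and finite_\<mu>: "finite_measure \<mu>"
    and \<mu>_outside_E: "emeasure \<mu> (UNIV - E) = 0" and finite_energy: "energy a \<mu> < \<infinity>"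
    and r_pos: "\<And>n. 0 < r n" and r_less_1: "\<And>n. r n < 1" and r_tendsto: "r \<longlonglongrightarrow> 1"
    and s_measurable: "\<And>n. s n \<in> borel_measurable borel"
    and s_finite: "\<And>n. finite (range (s n))" and s_E: "\<And>n. range (s n) \<subseteq> E"
    and s_close: "\<And>n x. x \<in> E \<Longrightarrow> dist (s n x) x < \<delta> n" and \<delta>_tendsto: "\<delta> \<longlonglongrightarrow> 0"
    and modulus: "\<And>n u v. u \<in> cball 0 (r n) \<Longrightarrow> v \<in> cball 0 (r n) \<Longrightarrow> dist u v < \<delta> n \<Longrightarrow>
      dist (kernel_profile a u) (kernel_profile a v) \<le> \<epsilon> n"
    and \<epsilon>_tendsto: "\<epsilon> \<longlonglongrightarrow> 0"
begin

sublocale rkhs "ball 0 1" "kernelD a" H ip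
  by (rule rkhs.intro[OF rkhs_D])

sublocale M: finite_measure \<mu>
  by (rule finite_\<mu>)

sublocale P: pair_sigma_finite \<mu> \<mu>
  by unfold_locales

abbreviation \<mu>2 :: "((complex^'n) \<times> (complex^'n)) measure" where
  "\<mu>2 \<equiv> \<mu> \<Otimes>\<^sub>M \<mu>"

lemma space_\<mu>: "space \<mu> = UNIV"
  using sets_eq_imp_space_eq[OF sets_\<mu>] by simp

lemma measurable_\<mu>: "measurable \<mu> N = measurable borel N"
  by (rule measurable_cong_sets[OF sets_\<mu> refl])

lemma sets_\<mu>2: "sets \<mu>2 = sets borel"
proof -
  have "sets \<mu>2 = sets ((borel :: (complex^'n) measure) \<Otimes>\<^sub>M (borel :: (complex^'n) measure))"
    by (rule sets_pair_measure_cong[OF sets_\<mu> sets_\<mu>])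
  then show ?thesis
    by (simp only: Binary_Product_Measure.borel_prod)
qed

lemma measurable_\<mu>2: "measurable \<mu>2 N = measurable borel N"
  by (rule measurable_cong_sets[OF sets_\<mu>2 refl])

lemma finite_\<mu>2: "finite_measure \<mu>2"
  by (rule finite_measure_pair_measure[OF finite_\<mu> finite_\<mu>])

lemma norm_E: "x \<in> E \<Longrightarrow> norm x = 1"
  using E_sphere by auto

lemma norm_s: "norm (s n x) = 1"
  using s_E[of n] norm_E by auto

lemma measurable_kernel_integrand:
  assumes "f \<in> borel_measurable borel" "g \<in> borel_measurable borel"
  shows "(\<lambda>p. kernel_profile a (of_real \<rho> * cinner (f (fst p)) (g (snd p)))) \<in> borel_measurable \<mu>2"
  unfolding measurable_\<mu>2 Binary_Product_Measure.borel_prod[symmetric] using assms by measurable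

lemma measurable_kernel_abs: "(\<lambda>p. kernel_abs a (fst p) (snd p)) \<in> borel_measurable \<mu>2"
  unfolding measurable_\<mu>2 Binary_Product_Measure.borel_prod[symmetric] kernel_abs_def
    kernelD_eq_kernel_profile by measurable

lemma AE_E: "AE x in \<mu>. x \<in> E"
  using \<mu>_outside_E E_borel sets_\<mu> by (intro AE_I[of _ _ "UNIV - E"]) (auto simp: space_\<mu>)

lemma AE_E2: "AE p in \<mu>2. fst p \<in> E \<and> snd p \<in> E"
proof -
  have "{p \<in> space \<mu>2. fst p \<in> E \<and> snd p \<in> E} = E \<times> E"
    by (auto simp: space_pair_measure space_\<mu>)
  then have "{p \<in> space \<mu>2. fst p \<in> E \<and> snd p \<in> E} \<in> sets \<mu>2"
    using E_borel by (simp add: sets_\<mu>)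
  moreover have "AE x in \<mu>. AE y in \<mu>. x \<in> E \<and> y \<in> E"
    using AE_E by auto
  ultimately show ?thesis
    using P.AE_pair_iff[of "\<lambda>x y. x \<in> E \<and> y \<in> E"] by simp
qed

lemma energy_eq: "energy a \<mu> = (\<integral>\<^sup>+ p. kernel_abs a (fst p) (snd p) \<partial>\<mu>2)"
  using M.nn_integral_fst[OF measurable_kernel_abs] by (simp add: energy_def)

lemma AE_cinner_ne_1: "AE p in \<mu>2. cinner (fst p) (snd p) \<noteq> 1"
proof -
  have "AE p in \<mu>2. kernel_abs a (fst p) (snd p) \<noteq> \<infinity>"
    using finite_energy energy_eq by (intro nn_integral_PInf_AE measurable_kernel_abs) auto
  then show ?thesis
    by eventually_elim (auto simp: kernel_abs_def)
qed

lemma integrable_kernel: "integrable \<mu>2 (\<lambda>p. kernel_profile a (cinner (fst p) (snd p)))"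
proof (rule integrableI_bounded)
  show "(\<lambda>p. kernel_profile a (cinner (fst p) (snd p))) \<in> borel_measurable \<mu>2"
    using measurable_kernel_integrand[of "\<lambda>x. x" "\<lambda>x. x" 1] by simp
  have "(\<integral>\<^sup>+ p. norm (kernel_profile a (cinner (fst p) (snd p))) \<partial>\<mu>2) \<le> energy a \<mu>"
    unfolding energy_eq
    by (intro nn_integral_mono) (simp add: kernel_abs_def kernelD_eq_kernel_profile)
  then show "(\<integral>\<^sup>+ p. norm (kernel_profile a (cinner (fst p) (snd p))) \<partial>\<mu>2) < \<infinity>"
    using finite_energy by (simp add: order_le_less_trans)
qed

definition weight :: "nat \<Rightarrow> complex^'n \<Rightarrow> real" where
  "weight n d = measure \<mu> (s n -` {d})"

text \<open>The potential of the push-forward of \<mu> under x \<mapsto> r n * s n x, a finitely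
  supported measure in the open ball.\<close>
definition discrete_potential :: "nat \<Rightarrow> complex^'n \<Rightarrow> complex" where
  "discrete_potential n =
     (\<lambda>z. \<Sum>d\<in>range (s n). of_real (weight n d) * kfun (ball 0 1) (kernelD a) (r n *\<^sub>R d) z)"

lemma scaled_in_ball: "norm x = 1 \<Longrightarrow> r n *\<^sub>R x \<in> ball 0 1"
  using r_pos[of n] r_less_1[of n] by simp

lemma scaled_s_in_ball: "r n *\<^sub>R s n x \<in> ball 0 1"
  using norm_s by (rule scaled_in_ball)

lemma discrete_potential_mem: "discrete_potential n \<in> H"
  unfolding discrete_potential_def using s_E norm_E s_finite
  by (intro sum_mem kfun_mem scaled_in_ball) auto

lemma integral_discretization:
  fixes g :: "complex^'n \<Rightarrow> complex"
  shows "(LINT x|\<mu>. g (s n x)) = (\<Sum>d\<in>range (s n). of_real (weight n d) * g d)"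
  using integral_finite_range(2)[OF finite_\<mu>, of "s n" g] s_measurable s_finite
  by (simp add: space_\<mu> measurable_\<mu> weight_def scaleR_conv_of_real)

lemma ip_discrete_potential:
  assumes f: "f \<in> H"
  shows "ip f (discrete_potential n) = (LINT x|\<mu>. f (r n *\<^sub>R s n x))"
proof -
  have ball: "r n *\<^sub>R d \<in> ball 0 1" if "d \<in> range (s n)" for d
    using that s_E[of n] norm_E by (intro scaled_in_ball) auto
  have "ip f (discrete_potential n) = (\<Sum>d\<in>range (s n). cnj (of_real (weight n d)) *
      ip f (kfun (ball 0 1) (kernelD a) (r n *\<^sub>R d)))"
    unfolding discrete_potential_def using s_finite ball f by (intro ip_sum_right kfun_mem) auto
  also have "\<dots> = (\<Sum>d\<in>range (s n). of_real (weight n d) * f (r n *\<^sub>R d))"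
    using ball f by (simp add: reproducing)
  finally show ?thesis
    by (simp add: integral_discretization[of "\<lambda>d. f (r n *\<^sub>R d)"])
qed

lemma discrete_potential_eq_integral:
  "z \<in> ball 0 1 \<Longrightarrow> discrete_potential n z = (LINT x|\<mu>. kernelD a z (r n *\<^sub>R s n x))"
  unfolding discrete_potential_def integral_discretization[of "\<lambda>d. kernelD a z (r n *\<^sub>R d)"]
  by (simp add: kfun_def)

lemma scaled_cinner_in_cball:
  assumes "norm u \<le> 1" "norm v \<le> 1"
  shows "of_real (r n * r m) * cinner u v \<in> cball 0 (r n) \<inter> cball 0 (r m)"
proof -
  have "r n * r m \<le> r n" "r n * r m \<le> r m"
    using r_pos[of n] r_pos[of m] r_less_1[of n] r_less_1[of m]
    by (simp_all add: mult_left_le mult_left_le_one_le)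
  moreover have "cmod (of_real (r n * r m) * cinner u v) \<le> r n * r m"
    using r_pos[of n] r_pos[of m] by (intro norm_scaled_cinner_le assms) simp
  ultimately show ?thesis
    unfolding Int_iff mem_cball_0 by linarith
qed

lemma integrable_discretized_kernel:
  "integrable \<mu>2 (\<lambda>p. kernel_profile a (of_real (r n * r m) * cinner (s n (fst p)) (s m (snd p))))"
proof -
  interpret M2: finite_measure \<mu>2
    by (rule finite_\<mu>2)
  obtain B where B: "\<forall>u\<in>cball 0 (r n). cmod (kernel_profile a u) \<le> B"
    using kernel_profile_bounded_cball[OF r_less_1[of n]] by blast
  show ?thesis
  proof (rule M2.integrable_const_bound[of _ B])
    show "AE p in \<mu>2.
        norm (kernel_profile a (of_real (r n * r m) * cinner (s n (fst p)) (s m (snd p)))) \<le> B"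
    proof (rule AE_I2)
      fix p
      have "of_real (r n * r m) * cinner (s n (fst p)) (s m (snd p)) \<in> cball 0 (r n)"
        using scaled_cinner_in_cball[of "s n (fst p)" "s m (snd p)" n m] norm_s by simp
      then show
        "norm (kernel_profile a (of_real (r n * r m) * cinner (s n (fst p)) (s m (snd p)))) \<le> B"
        using B by blast
    qed
  qed (intro measurable_kernel_integrand s_measurable)
qed

lemma ip_discrete_potentials: "ip (discrete_potential m) (discrete_potential n)
  = (LINT p|\<mu>2. kernel_profile a (of_real (r n * r m) * cinner (s n (fst p)) (s m (snd p))))"
proof -
  have "ip (discrete_potential m) (discrete_potential n)
      = (LINT x|\<mu>. LINT x'|\<mu>. kernel_profile a (of_real (r n * r m) * cinner (s n x) (s m x')))"
    using ip_discrete_potential[OF discrete_potential_mem]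
      discrete_potential_eq_integral[OF scaled_s_in_ball]
    by (simp add: kernelD_eq_kernel_profile cinner_scaleR_left cinner_scaleR_right mult_ac)
  also have "\<dots>
      = (LINT p|\<mu>2. kernel_profile a (of_real (r n * r m) * cinner (s n (fst p)) (s m (snd p))))"
    using P.integral_fst'[OF integrable_discretized_kernel] by simp
  finally show ?thesis .
qed

definition energy_integral :: "real \<Rightarrow> complex" where
  "energy_integral \<rho> = (LINT p|\<mu>2. kernel_profile a (of_real \<rho> * cinner (fst p) (snd p)))"

lemma AE_kernel_scaled_le: "AE p in \<mu>2. \<forall>\<rho>\<in>{0..1}.
  cmod (kernel_profile a (of_real \<rho> * cinner (fst p) (snd p)))
    \<le> 2 * cmod (kernel_profile a (cinner (fst p) (snd p))) + 8"
  using AE_E2 AE_cinner_ne_1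
proof eventually_elim
  case (elim p)
  then have "cmod (cinner (fst p) (snd p)) \<le> 1"
    using norm_scaled_cinner_le[of "fst p" "snd p" 1] norm_E by simp
  then show ?case
    using norm_kernel_profile_scaled_le[OF a_le_1] elim by auto
qed

lemma integrable_kernel_scaled_bound:
  "integrable \<mu>2 (\<lambda>p. 2 * cmod (kernel_profile a (cinner (fst p) (snd p))) + 8)"
proof -
  interpret M2: finite_measure \<mu>2
    by (rule finite_\<mu>2)
  show ?thesis
    using integrable_kernel
    by (intro Bochner_Integration.integrable_add integrable_mult_right integrable_norm) auto
qed

lemma integrable_kernel_scaled:
  assumes "0 \<le> \<rho>" "\<rho> \<le> 1"
  shows "integrable \<mu>2 (\<lambda>p. kernel_profile a (of_real \<rho> * cinner (fst p) (snd p)))"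
proof (rule Bochner_Integration.integrable_bound[OF integrable_kernel_scaled_bound])
  show "(\<lambda>p. kernel_profile a (of_real \<rho> * cinner (fst p) (snd p))) \<in> borel_measurable \<mu>2"
    using measurable_kernel_integrand[of "\<lambda>x. x" "\<lambda>x. x"] by simp
  show "AE p in \<mu>2. norm (kernel_profile a (of_real \<rho> * cinner (fst p) (snd p)))
      \<le> norm (2 * cmod (kernel_profile a (cinner (fst p) (snd p))) + 8)"
    using AE_kernel_scaled_le by eventually_elim (use assms in auto)
qed

lemma tendsto_energy_integral: "(energy_integral \<longlongrightarrow> energy_integral 1) (at_left 1)"
proof (rule tendsto_at_left_sequentially[of 0])
  fix S :: "nat \<Rightarrow> real"
  assume S: "\<And>n. S n < 1" "\<And>n. 0 < S n" "S \<longlonglongrightarrow> 1"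
  show "(\<lambda>n. energy_integral (S n)) \<longlonglongrightarrow> energy_integral 1"
    unfolding energy_integral_def
  proof (rule integral_dominated_convergence[OF _ _ integrable_kernel_scaled_bound])
    show "(\<lambda>p. kernel_profile a (of_real 1 * cinner (fst p) (snd p))) \<in> borel_measurable \<mu>2"
      "\<And>n. (\<lambda>p. kernel_profile a (of_real (S n) * cinner (fst p) (snd p))) \<in> borel_measurable \<mu>2"
      using measurable_kernel_integrand[of "\<lambda>x. x" "\<lambda>x. x" 1]
        measurable_kernel_integrand[of "\<lambda>x. x" "\<lambda>x. x" "S n" for n] by simp_all
    show "AE p in \<mu>2. norm (kernel_profile a (of_real (S n) * cinner (fst p) (snd p)))
        \<le> 2 * cmod (kernel_profile a (cinner (fst p) (snd p))) + 8" for n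
      using AE_kernel_scaled_le
    proof eventually_elim
      case (elim p)
      then show ?case
        using S(1,2)[of n] by simp
    qed
    show "AE p in \<mu>2. (\<lambda>n. kernel_profile a (of_real (S n) * cinner (fst p) (snd p)))
        \<longlonglongrightarrow> kernel_profile a (of_real 1 * cinner (fst p) (snd p))"
      using AE_E2 AE_cinner_ne_1
    proof eventually_elim
      case (elim p)
      then have "Re (cinner (fst p) (snd p)) < 1"
        using norm_scaled_cinner_le[of "fst p" "snd p" 1] norm_E by (intro Re_less_1) simp_all
      then show ?case
        by (intro isCont_tendsto_compose[OF isCont_kernel_profile] tendsto_intros S(3)) simp
    qed
  qed
qed simp

lemma kernel_discretization_error:
  assumes x: "x \<in> E" and x': "x' \<in> E"
  shows "cmod (kernel_profile a (of_real (r n * r m) * cinner (s n x) (s m x'))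
    - kernel_profile a (of_real (r n * r m) * cinner x x')) \<le> \<epsilon> n + \<epsilon> m"
proof -
  let ?\<rho> = "r n * r m"
  define u1 u2 u3 where "u1 = of_real ?\<rho> * cinner (s n x) (s m x')"
    and "u2 = of_real ?\<rho> * cinner x (s m x')" and "u3 = of_real ?\<rho> * cinner x x'"
  have norms: "norm x = 1" "norm x' = 1" "norm (s n x) = 1" "norm (s m x') = 1"
    using norm_E x x' norm_s by auto
  have \<rho>: "0 \<le> ?\<rho>" "?\<rho> \<le> 1"
    using r_pos[of n] r_pos[of m] r_less_1[of n] r_less_1[of m] by (simp_all add: mult_le_one)
  have u: "u1 \<in> cball 0 (r n) \<inter> cball 0 (r m)" "u2 \<in> cball 0 (r n) \<inter> cball 0 (r m)"
    "u3 \<in> cball 0 (r n) \<inter> cball 0 (r m)"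
    unfolding u1_def u2_def u3_def using norms by (intro scaled_cinner_in_cball; simp)+
  have "dist u1 u2 \<le> dist (s n x) x"
    unfolding u1_def u2_def using norms \<rho> by (intro dist_scaled_cinner_left_le) simp_all
  then have "dist (kernel_profile a u1) (kernel_profile a u2) \<le> \<epsilon> n"
    using u s_close[OF x, of n] by (intro modulus) auto
  moreover have "dist u2 u3 \<le> dist (s m x') x'"
    unfolding u2_def u3_def using norms \<rho> by (intro dist_scaled_cinner_right_le) simp_all
  then have "dist (kernel_profile a u2) (kernel_profile a u3) \<le> \<epsilon> m"
    using u s_close[OF x', of m] by (intro modulus) auto
  ultimately have "dist (kernel_profile a u1) (kernel_profile a u3) \<le> \<epsilon> n + \<epsilon> m"
    using dist_triangle[of "kernel_profile a u1" "kernel_profile a u3" "kernel_profile a u2"] by linarith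
  then show ?thesis
    by (simp add: u1_def u3_def dist_norm)
qed

lemma ip_discrete_potentials_approx:
  "cmod (ip (discrete_potential m) (discrete_potential n) - energy_integral (r n * r m))
    \<le> (\<epsilon> n + \<epsilon> m) * measure \<mu>2 (space \<mu>2)"
proof -
  interpret M2: finite_measure \<mu>2
    by (rule finite_\<mu>2)
  define F where
    "F = (\<lambda>p. kernel_profile a (of_real (r n * r m) * cinner (s n (fst p)) (s m (snd p))))"
  define G where "G = (\<lambda>p :: (complex^'n) \<times> (complex^'n).
    kernel_profile a (of_real (r n * r m) * cinner (fst p) (snd p)))"
  have F: "integrable \<mu>2 F"
    unfolding F_def by (rule integrable_discretized_kernel)
  have G: "integrable \<mu>2 G"
    unfolding G_def using r_pos[of n] r_pos[of m] r_less_1[of n] r_less_1[of m]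
    by (intro integrable_kernel_scaled) (simp_all add: mult_le_one)
  have "ip (discrete_potential m) (discrete_potential n) - energy_integral (r n * r m)
      = (LINT p|\<mu>2. F p - G p)"
    using F G by (simp add: ip_discrete_potentials energy_integral_def F_def G_def)
  also have "cmod \<dots> \<le> (LINT p|\<mu>2. cmod (F p - G p))"
    by (rule integral_norm_bound)
  also have "\<dots> \<le> (LINT p|\<mu>2. \<epsilon> n + \<epsilon> m)"
  proof (rule integral_mono_AE)
    show "AE p in \<mu>2. cmod (F p - G p) \<le> \<epsilon> n + \<epsilon> m"
      using AE_E2
    proof eventually_elim
      case (elim p)
      then show ?case
        unfolding F_def G_def by (intro kernel_discretization_error) auto
    qed
  qed (use F G in auto)
  finally show ?thesis
    by (simp add: mult.commute)
qed

lemma ip_discrete_potentials_tendsto: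
  "((\<lambda>(m, n). ip (discrete_potential m) (discrete_potential n)) \<longlongrightarrow> energy_integral 1)
    (sequentially \<times>\<^sub>F sequentially)"
proof -
  let ?F = "sequentially \<times>\<^sub>F sequentially"
  have r_fst: "((\<lambda>p. r (fst p)) \<longlongrightarrow> 1) ?F" and r_snd: "((\<lambda>p. r (snd p)) \<longlongrightarrow> 1) ?F"
    using filterlim_compose[OF r_tendsto filterlim_fst] filterlim_compose[OF r_tendsto filterlim_snd]
    by auto
  have "((\<lambda>p. r (snd p) * r (fst p)) \<longlongrightarrow> 1) ?F"
    using tendsto_mult[OF r_snd r_fst] by simp
  moreover have "r i * r j < 1" for i j
  proof -
    have "r i * r j \<le> r i"
      using r_pos[of i] r_less_1[of j] by (intro mult_left_le) auto
    then show ?thesis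
      using r_less_1[of i] by linarith
  qed
  ultimately have "filterlim (\<lambda>p. r (snd p) * r (fst p)) (at_left 1) ?F"
    by (intro filterlim_at_withinI) simp_all
  then have lim_energy: "((\<lambda>p. energy_integral (r (snd p) * r (fst p))) \<longlongrightarrow> energy_integral 1) ?F"
    by (rule filterlim_compose[OF tendsto_energy_integral])
  have \<epsilon>_fst: "((\<lambda>p. \<epsilon> (fst p)) \<longlongrightarrow> 0) ?F" and \<epsilon>_snd: "((\<lambda>p. \<epsilon> (snd p)) \<longlongrightarrow> 0) ?F"
    using filterlim_compose[OF \<epsilon>_tendsto filterlim_fst] filterlim_compose[OF \<epsilon>_tendsto filterlim_snd]
    by auto
  have "((\<lambda>p. (\<epsilon> (snd p) + \<epsilon> (fst p)) * measure \<mu>2 (space \<mu>2)) \<longlongrightarrow> 0) ?F"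
    using tendsto_mult_left_zero[OF tendsto_add_zero[OF \<epsilon>_snd \<epsilon>_fst]] by simp
  from Lim_null_comparison[OF always_eventually[OF allI[OF ip_discrete_potentials_approx]] this]
  have "((\<lambda>p. ip (discrete_potential (fst p)) (discrete_potential (snd p))
      - energy_integral (r (snd p) * r (fst p))) \<longlongrightarrow> 0) ?F" .
  from tendsto_add[OF this lim_energy]
  have "((\<lambda>p. ip (discrete_potential (fst p)) (discrete_potential (snd p))) \<longlongrightarrow> energy_integral 1) ?F"
    by simp
  then show ?thesis
    by (simp only: case_prod_unfold)
qed

lemma s_tendsto: "x \<in> E \<Longrightarrow> (\<lambda>n. s n x) \<longlonglongrightarrow> x"
proof -
  assume x: "x \<in> E"
  have "(\<lambda>n. dist (s n x) x) \<longlonglongrightarrow> 0"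
    using s_close[OF x]
    by (intro Lim_null_comparison[OF always_eventually \<delta>_tendsto]) (simp add: less_imp_le)
  then show ?thesis
    by (rule tendsto_dist_iff[THEN iffD2])
qed

lemma tendsto_integral_scaled_discretization:
  fixes p :: "complex^'n \<Rightarrow> complex"
  assumes p: "continuous_on UNIV p"
  shows "(\<lambda>n. LINT x|\<mu>. p (r n *\<^sub>R s n x)) \<longlonglongrightarrow> (LINT x|\<mu>. p x)"
proof -
  have "bounded (p ` cball 0 1)"
    by (intro compact_imp_bounded compact_continuous_image continuous_on_subset[OF p]) auto
  then obtain B where B: "\<forall>u\<in>cball 0 1. norm (p u) \<le> B"
    unfolding bounded_iff by auto
  have p_measurable: "p \<in> borel_measurable borel"
    using p by (rule borel_measurable_continuous_onI)
  show ?thesis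
  proof (rule integral_dominated_convergence[where w = "\<lambda>_. B"])
    show "p \<in> borel_measurable \<mu>"
      unfolding measurable_\<mu> by (rule p_measurable)
    show "(\<lambda>x. p (r n *\<^sub>R s n x)) \<in> borel_measurable \<mu>" for n
      unfolding measurable_\<mu>
      by (rule measurable_compose[OF _ p_measurable]) (use s_measurable[of n] in measurable)
    show "integrable \<mu> (\<lambda>_. B)"
      by simp
    show "AE x in \<mu>. (\<lambda>n. p (r n *\<^sub>R s n x)) \<longlonglongrightarrow> p x"
      using AE_E
    proof eventually_elim
      case (elim x)
      have "(\<lambda>n. r n *\<^sub>R s n x) \<longlonglongrightarrow> 1 *\<^sub>R x"
        by (intro tendsto_scaleR r_tendsto s_tendsto elim)
      moreover have "isCont p x"
        using p continuous_on_eq_continuous_at[OF open_UNIV] by blast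
      ultimately show ?case
        using isCont_tendsto_compose by fastforce
    qed
    show "AE x in \<mu>. norm (p (r n *\<^sub>R s n x)) \<le> B" for n
    proof (rule AE_I2)
      fix x
      have "r n *\<^sub>R s n x \<in> cball 0 1"
        using scaled_s_in_ball[of n x] by simp
      then show "norm (p (r n *\<^sub>R s n x)) \<le> B"
        using B by blast
    qed
  qed
qed

lemma potential_exists:
  "\<exists>g\<in>H. \<forall>f\<in>H. \<forall>p. continuous_on UNIV p \<longrightarrow> (\<forall>z\<in>ball 0 1. f z = p z) \<longrightarrow>
    ip f g = (LINT x|\<mu>. p x)"
proof -
  obtain g where g: "g \<in> H" "(\<lambda>n. hnorm ip (\<lambda>z. discrete_potential n z - g z)) \<longlonglongrightarrow> 0"
    using convergent_if_inner_tendsto[OF discrete_potential_mem ip_discrete_potentials_tendsto] by blast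
  have "ip f g = (LINT x|\<mu>. p x)"
    if f: "f \<in> H" and p: "continuous_on UNIV p" and fp: "\<forall>z\<in>ball 0 1. f z = p z" for f p
  proof -
    have "ip f (discrete_potential n) = (LINT x|\<mu>. p (r n *\<^sub>R s n x))" for n
      using ip_discrete_potential[OF f] fp scaled_s_in_ball by simp
    then have "(\<lambda>n. ip f (discrete_potential n)) \<longlonglongrightarrow> (LINT x|\<mu>. p x)"
      using tendsto_integral_scaled_discretization[OF p] by simp
    then show ?thesis
      by (rule LIMSEQ_unique[OF tendsto_ip_right[OF f g(1) discrete_potential_mem g(2)]])
  qed
  then show ?thesis
    using g(1) by blast
qed


lemma sphere_cmeasure: "sphere_cmeasure \<mu> (\<lambda>_. 1)"
proof -
  have "emeasure \<mu> (UNIV - sphere 0 1) \<le> emeasure \<mu> (UNIV - E)"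
    using E_sphere E_borel sets_\<mu> by (intro emeasure_mono) auto
  then show ?thesis
    using sets_\<mu> finite_\<mu> \<mu>_outside_E by (simp add: sphere_cmeasure_def)
qed

lemma henkin: "henkin H ip \<mu> (\<lambda>_. 1)"
proof -
  obtain g where g: "g \<in> H" and moments: "\<And>f p. f \<in> H \<Longrightarrow> continuous_on UNIV p \<Longrightarrow>
      (\<forall>z\<in>ball 0 1. f z = p z) \<Longrightarrow> ip f g = (LINT x|\<mu>. p x)"
    using potential_exists by blast
  show ?thesis
  proof (rule henkinI_moments[OF rkhs_D _ g sphere_cmeasure])
    show "kernelD a z 0 = 1" for z
      by (simp add: kernelD_eq_kernel_profile cinner_zero_right)
    show "ip (restrict0 (ball 0 1) p) g = (LINT z|\<mu>. p z * 1)"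
      if "is_poly p" "restrict0 (ball 0 1) p \<in> H" for p
      using moments[OF that(2) continuous_on_is_poly[OF that(1)]] by (simp add: restrict0_def)
  qed
qed
end

section \<open>Totally null sets have capacity zero\<close>

lemma kernel_profile_moduli:
  assumes "\<And>n. \<rho> n < 1" "\<And>n. 0 < \<epsilon> n"
  shows "\<exists>\<delta>. \<forall>n. 0 < \<delta> n \<and> \<delta> n \<le> \<epsilon> n \<and> (\<forall>u\<in>cball 0 (\<rho> n). \<forall>v\<in>cball 0 (\<rho> n).
    dist u v < \<delta> n \<longrightarrow> dist (kernel_profile a u) (kernel_profile a v) \<le> \<epsilon> n)"
proof -
  have "\<exists>d. 0 < d \<and> d \<le> \<epsilon> n \<and> (\<forall>u\<in>cball 0 (\<rho> n). \<forall>v\<in>cball 0 (\<rho> n).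
    dist u v < d \<longrightarrow> dist (kernel_profile a u) (kernel_profile a v) \<le> \<epsilon> n)" for n
  proof -
    have "uniformly_continuous_on (cball 0 (\<rho> n)) (kernel_profile a)"
      using continuous_on_kernel_profile_cball[OF assms(1)] by (intro compact_uniformly_continuous) auto
    then obtain d where "d > 0" and d: "\<forall>u\<in>cball 0 (\<rho> n). \<forall>v\<in>cball 0 (\<rho> n).
        dist v u < d \<longrightarrow> dist (kernel_profile a v) (kernel_profile a u) < \<epsilon> n"
      using assms(2) unfolding uniformly_continuous_on_def by metis
    then show ?thesis
      using assms(2)[of n] by (intro exI[of _ "min d (\<epsilon> n)"]) (auto simp: dist_commute less_imp_le)
  qed
  then show ?thesis
    by (metis choice)
qed

lemma discretized_potential_exists:
  assumes "a \<le> 1" and E: "compact E" "E \<noteq> {}" "E \<subseteq> sphere 0 1"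
    and "rkhs_on (ball 0 1) (kernelD a) H ip"
    and "sets \<mu> = sets borel" "finite_measure \<mu>" "emeasure \<mu> (UNIV - E) = 0"
    and "energy a \<mu> < \<infinity>"
  shows "\<exists>r \<delta> \<epsilon> s. discretized_potential a E H ip \<mu> r \<delta> \<epsilon> s"
proof -
  define \<epsilon> :: "nat \<Rightarrow> real" where "\<epsilon> n = inverse (real (Suc n))" for n
  define r :: "nat \<Rightarrow> real" where "r n = 1 - \<epsilon> (Suc n)" for n
  have \<epsilon>_pos: "0 < \<epsilon> n" for n
    by (simp add: \<epsilon>_def)
  have r: "0 < r n" "r n < 1" for n
    using \<epsilon>_pos[of "Suc n"] by (simp_all add: r_def \<epsilon>_def inverse_less_1_iff)
  have \<epsilon>_tendsto: "\<epsilon> \<longlonglongrightarrow> 0"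
    unfolding \<epsilon>_def[abs_def] by (rule LIMSEQ_inverse_real_of_nat)
  have r_tendsto: "r \<longlonglongrightarrow> 1"
    using tendsto_diff[OF tendsto_const[of 1] LIMSEQ_Suc[OF \<epsilon>_tendsto]]
    by (simp only: r_def[abs_def] diff_zero)
  obtain \<delta> where \<delta>: "\<forall>n. 0 < \<delta> n \<and> \<delta> n \<le> \<epsilon> n \<and> (\<forall>u\<in>cball 0 (r n). \<forall>v\<in>cball 0 (r n).
      dist u v < \<delta> n \<longrightarrow> dist (kernel_profile a u) (kernel_profile a v) \<le> \<epsilon> n)"
    using kernel_profile_moduli[of r \<epsilon> a] r \<epsilon>_pos by blast
  have \<delta>_tendsto: "\<delta> \<longlonglongrightarrow> 0"
    using \<delta> by (intro Lim_null_comparison[OF always_eventually \<epsilon>_tendsto]) (simp add: less_imp_le)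
  have "\<forall>n. \<exists>t. t \<in> borel_measurable borel \<and> finite (range t) \<and> range t \<subseteq> E \<and>
      (\<forall>x\<in>E. dist (t x) x < \<delta> n)"
    using compact_borel_discretization[OF E(1,2)] \<delta> by blast
  from choice[OF this] obtain s where s: "\<forall>n. s n \<in> borel_measurable borel \<and>
      finite (range (s n)) \<and> range (s n) \<subseteq> E \<and> (\<forall>x\<in>E. dist (s n x) x < \<delta> n)"
    by blast
  have "discretized_potential a E H ip \<mu> r \<delta> \<epsilon> s"
  proof (rule discretized_potential.intro)
    show "E \<in> sets borel"
      using E(1) by (simp add: compact_imp_closed)
    show "s n \<in> borel_measurable borel" "finite (range (s n))" "range (s n) \<subseteq> E"
      "x \<in> E \<Longrightarrow> dist (s n x) x < \<delta> n" for n x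
      using s by blast+
    show "u \<in> cball 0 (r n) \<Longrightarrow> v \<in> cball 0 (r n) \<Longrightarrow> dist u v < \<delta> n \<Longrightarrow>
        dist (kernel_profile a u) (kernel_profile a v) \<le> \<epsilon> n" for n u v
      using \<delta> by blast
  qed (fact assms r r_tendsto \<delta>_tendsto \<epsilon>_tendsto)+
  then show ?thesis
    by blast
qed

lemma emeasure_null_if_totally_null:
  assumes "a \<le> 1" "compact E" "E \<subseteq> sphere 0 1"
    and "rkhs_on (ball 0 1) (kernelD a) H ip" and null: "totally_null H ip E"
    and "sets \<mu> = sets borel" "finite_measure \<mu>" "emeasure \<mu> (UNIV - E) = 0"
    and "energy a \<mu> < \<infinity>"
  shows "emeasure \<mu> E = 0"
proof (cases "E = {}")
  case False
  then obtain r \<delta> \<epsilon> s where "discretized_potential a E H ip \<mu> r \<delta> \<epsilon> s"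
    using discretized_potential_exists assms by metis
  then interpret discretized_potential a E H ip \<mu> r \<delta> \<epsilon> s .
  have "(\<integral>\<^sup>+ z\<in>E. 1 \<partial>\<mu>) = 0"
    using null sphere_cmeasure henkin unfolding totally_null_def by fastforce
  then show ?thesis
    using E_borel sets_\<mu> by simp
qed simp

theorem proposition3p3:
  fixes a :: real
    and E :: "(complex^'n) set"
    and H :: "(complex^'n \<Rightarrow> complex) set"
    and ip :: "(complex^'n \<Rightarrow> complex) \<Rightarrow> (complex^'n \<Rightarrow> complex) \<Rightarrow> complex"
  assumes "0 \<le> a" and "a < 1"
    and "compact E" and "E \<subseteq> sphere 0 1"
    and "rkhs_on (ball 0 1) (kernelD a) H ip"
    and "totally_null H ip E"
  shows "capacity a E = 0"
proof -
  have "emeasure \<mu> E = 0"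
    if "\<mu> \<in> {\<mu>. sets \<mu> = sets borel \<and> finite_measure \<mu> \<and> emeasure \<mu> (UNIV - E) = 0 \<and>
      energy a \<mu> \<le> 1}" for \<mu>
  proof -
    from that have \<mu>: "sets \<mu> = sets borel" "finite_measure \<mu>" "emeasure \<mu> (UNIV - E) = 0"
      "energy a \<mu> \<le> 1"
      by simp_all
    have "energy a \<mu> < \<infinity>"
      using order_le_less_trans[OF \<mu>(4), of \<infinity>] by simp
    then show ?thesis
      by (rule emeasure_null_if_totally_null[OF less_imp_le[OF assms(2)] assms(3-6) \<mu>(1-3)])
  qed
  then have "cap_sqrt a E \<le> 0"
    unfolding cap_sqrt_def by (intro SUP_least) auto
  then have "cap_sqrt a E = 0"
    by simp
  then show ?thesis
    by (simp add: capacity_def)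
qed

end
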